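(* Let $G=A\oplus T$ be an abelian group where $T$ is the torsion subgroup of $G$ (so $A\cong G/T$ is torsion-free). Then $G$ is strongly co-Hopfian if and only if both $T$ and $A$ are strongly co-Hopfian.
   Context: All groups are abelian. A group $G$ is strongly co-Hopfian if for every endomorphism $f$ of $G$ there is $n\in\mathbb N$ with $f^n(G)=f^{n+1}(G)$. *)

theory Defs
  imports Main
begin

text \<open>Abelian groups are modelled by the type class ab_group_add: the ambient
abelian group G is the whole type, and subgroups are subsets.\<close>

definition subgrp :: "'a::ab_group_add set \<Rightarrow> bool" where
  "subgrp H \<longleftrightarrow> 0 \<in> H \<and> (\<forall>x\<in>H. \<forall>y\<in>H. x + y \<in> H) \<and> (\<forall>x\<in>H. - x \<in> H)"

text \<open>An endomorphism of the subgroup H (a group homomorphism H -> H); only the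
values on H matter.\<close>
definition endo_on :: "'a::ab_group_add set \<Rightarrow> ('a \<Rightarrow> 'a) \<Rightarrow> bool" where
  "endo_on H f \<longleftrightarrow> (\<forall>x\<in>H. f x \<in> H) \<and> (\<forall>x\<in>H. \<forall>y\<in>H. f (x + y) = f x + f y)"

definition strongly_co_Hopfian :: "'a::ab_group_add set \<Rightarrow> bool" where
  "strongly_co_Hopfian H \<longleftrightarrow>
     (\<forall>f. endo_on H f \<longrightarrow> (\<exists>n::nat. (f ^^ n) ` H = (f ^^ Suc n) ` H))"

definition torsion_part :: "'a::ab_group_add set" where
  "torsion_part = {x. \<exists>n::nat. n > 0 \<and> (\<Sum>i<n. x) = 0}"

end

theory Submission
  imports Defs "HOL.Modules"
begin

text \<open>Each summand H is a retract of G via a projection p, and an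
  endomorphism f of H extends to f \<circ> p on G, whose image chain is that of f shifted by one;
  so strong co-Hopficity passes from G to both summands.

  Conversely let F be an endomorphism of G and \<pi> the projection onto A. Since T is fully
  invariant, F restricts to T and induces \<alpha> = \<pi> \<circ> F on A \<cong> G/T, with F^m \<equiv> \<alpha>^m modulo T.
  Choose N from which on the image chains of \<alpha> on A and of F on T are constant. Then F^N G \<subseteq> F^(N+1) G + T, and applying F^N
  once more gives F^(2N) G \<subseteq> F^(2N+1) G + F^N T = F^(2N+1) G + F^(2N+1) T = F^(2N+1) G.\<close>

lemma funpow_image_stable:
  fixes f :: "'a \<Rightarrow> 'a"
  assumes "(f ^^ n) ` H = (f ^^ Suc n) ` H" and "n \<le> m"
  shows "(f ^^ m) ` H = (f ^^ n) ` H"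
  using assms(2)
proof (induction m rule: dec_induct)
  case (step k)
  have "(f ^^ Suc k) ` H = f ` (f ^^ k) ` H"
    by (simp add: image_comp)
  also have "\<dots> = (f ^^ Suc n) ` H"
    using step.IH by (simp add: image_comp)
  finally show ?case
    using assms(1) by simp
qed simp

lemma range_funpow_Suc_subset:
  fixes f :: "'a \<Rightarrow> 'a"
  shows "range (f ^^ Suc n) \<subseteq> range (f ^^ n)"
  by (auto simp del: funpow.simps simp: funpow_Suc_right)

lemma additive_funpow:
  fixes f :: "'a::ab_group_add \<Rightarrow> 'a"
  shows "additive f \<Longrightarrow> additive (f ^^ n)"
  by (induction n) (auto simp: additive_def)

lemma additive_comp: "additive f \<Longrightarrow> additive g \<Longrightarrow> additive (f \<circ> g)"
  by (simp add: additive_def)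

lemma endo_on_UNIV_iff_additive: "endo_on UNIV f \<longleftrightarrow> additive f"
  by (simp add: endo_on_def additive_def)

lemma strongly_co_Hopfian_imp_stable:
  assumes "strongly_co_Hopfian H" and "endo_on H f"
  obtains n where "\<And>m. n \<le> m \<Longrightarrow> (f ^^ m) ` H = (f ^^ n) ` H"
  using assms funpow_image_stable unfolding strongly_co_Hopfian_def by metis

lemma subgrp_add: "subgrp S \<Longrightarrow> x \<in> S \<Longrightarrow> y \<in> S \<Longrightarrow> x + y \<in> S"
  unfolding subgrp_def by blast

lemma subgrp_diff: "subgrp S \<Longrightarrow> x \<in> S \<Longrightarrow> y \<in> S \<Longrightarrow> x - y \<in> S"
  unfolding subgrp_def by (metis diff_conv_add_uminus)

lemma range_funpow_Suc_comp_retraction: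
  fixes f p :: "'a \<Rightarrow> 'a"
  assumes f: "\<And>x. x \<in> H \<Longrightarrow> f x \<in> H"
    and p: "\<And>x. p x \<in> H" "\<And>h. h \<in> H \<Longrightarrow> p h = h"
  shows "range ((f \<circ> p) ^^ Suc m) = (f ^^ Suc m) ` H"
proof -
  have agree: "((f \<circ> p) ^^ m) x = (f ^^ m) x \<and> (f ^^ m) x \<in> H" if "x \<in> H" for m x
  proof (induction m)
    case (Suc m)
    then show ?case
      using f p(2) by simp
  qed (simp add: that)
  have "range p = H"
  proof
    show "H \<subseteq> range p"
    proof
      fix h assume "h \<in> H"
      then have "h = p h"
        by (simp add: p(2))
      then show "h \<in> range p"
        by (rule range_eqI)
    qed
  qed (use p(1) in blast)
  have "range ((f \<circ> p) ^^ Suc m) = ((f \<circ> p) ^^ m) ` f ` range p"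
    by (simp only: funpow_Suc_right image_comp comp_assoc)
  also have "\<dots> = (f ^^ m) ` f ` H"
    unfolding \<open>range p = H\<close> using agree f by (intro image_cong) auto
  also have "\<dots> = (f ^^ Suc m) ` H"
    by (simp only: funpow_Suc_right image_comp)
  finally show ?thesis .
qed

lemma strongly_co_Hopfian_retract:
  fixes p :: "'a::ab_group_add \<Rightarrow> 'a"
  assumes G: "strongly_co_Hopfian (UNIV :: 'a set)"
    and p: "additive p" "\<And>x. p x \<in> H" "\<And>h. h \<in> H \<Longrightarrow> p h = h"
  shows "strongly_co_Hopfian H"
  unfolding strongly_co_Hopfian_def
proof (intro allI impI)
  fix f assume f: "endo_on H f"
  then have fH: "\<And>x. x \<in> H \<Longrightarrow> f x \<in> H"
    by (simp add: endo_on_def)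
  have "endo_on UNIV (f \<circ> p)"
    using f p(1,2) unfolding endo_on_def additive_def by simp
  then obtain n where n: "\<And>m. n \<le> m \<Longrightarrow> range ((f \<circ> p) ^^ m) = range ((f \<circ> p) ^^ n)"
    using G strongly_co_Hopfian_imp_stable by blast
  have "range ((f \<circ> p) ^^ Suc n) = range ((f \<circ> p) ^^ Suc (Suc n))"
    using n[of "Suc n"] n[of "Suc (Suc n)"] by simp
  then have "(f ^^ Suc n) ` H = (f ^^ Suc (Suc n)) ` H"
    by (simp only: range_funpow_Suc_comp_retraction[OF fH p(2,3)])
  then show "\<exists>n. (f ^^ n) ` H = (f ^^ Suc n) ` H"
    by blast
qed

locale direct_sum =
  fixes H K :: "'a::ab_group_add set"
  assumes subgrp_H: "subgrp H" and subgrp_K: "subgrp K"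
    and disjoint: "H \<inter> K = {0}"
    and spanning: "{h + k | h k. h \<in> H \<and> k \<in> K} = UNIV"
begin

definition proj :: "'a \<Rightarrow> 'a" where
  "proj x = (SOME h. h \<in> H \<and> x - h \<in> K)"

lemma proj_mem: "proj x \<in> H" and minus_proj_mem: "x - proj x \<in> K"
proof -
  obtain h k where "x = h + k" "h \<in> H" "k \<in> K"
    using spanning by blast
  then have "\<exists>h. h \<in> H \<and> x - h \<in> K"
    by (intro exI[of _ h]) simp
  then have "proj x \<in> H \<and> x - proj x \<in> K"
    unfolding proj_def by (rule someI_ex)
  then show "proj x \<in> H" "x - proj x \<in> K"
    by auto
qed

lemma proj_unique:
  assumes "h \<in> H" and "x - h \<in> K"
  shows "proj x = h"
proof -
  have "proj x - h \<in> H"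
    using subgrp_diff[OF subgrp_H] assms(1) proj_mem by blast
  moreover have "(x - h) - (x - proj x) \<in> K"
    by (rule subgrp_diff[OF subgrp_K assms(2) minus_proj_mem])
  then have "proj x - h \<in> K"
    by simp
  ultimately have "proj x - h = 0"
    using disjoint by blast
  then show ?thesis
    by simp
qed

lemma additive_proj: "additive proj"
proof
  fix x y
  have "proj x + proj y \<in> H"
    using subgrp_add[OF subgrp_H proj_mem proj_mem] .
  moreover have "(x + y) - (proj x + proj y) \<in> K"
    using subgrp_add[OF subgrp_K minus_proj_mem minus_proj_mem] by (simp add: algebra_simps)
  ultimately show "proj (x + y) = proj x + proj y"
    by (rule proj_unique)
qed

lemma proj_H: "h \<in> H \<Longrightarrow> proj h = h"
  using subgrp_K by (intro proj_unique) (simp_all add: subgrp_def)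

lemma proj_K: "k \<in> K \<Longrightarrow> proj k = 0"
  using subgrp_H by (intro proj_unique) (simp_all add: subgrp_def)

lemma co_Hopfian_summands:
  assumes "strongly_co_Hopfian (UNIV :: 'a set)"
  shows "strongly_co_Hopfian H" and "strongly_co_Hopfian K"
proof -
  show "strongly_co_Hopfian H"
    using assms additive_proj proj_mem proj_H by (rule strongly_co_Hopfian_retract)
  show "strongly_co_Hopfian K"
  proof (rule strongly_co_Hopfian_retract[OF assms, where p = "\<lambda>x. x - proj x"])
    show "additive (\<lambda>x. x - proj x)"
      using additive_proj by (simp add: additive_def)
  qed (simp_all add: minus_proj_mem proj_K)
qed

text \<open>proj \<circ> F is the endomorphism induced by F on H \<cong> G/K.\<close>

lemma funpow_minus_funpow_proj_mem:
  assumes F: "additive F" and FK: "F ` K \<subseteq> K"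
  shows "(F ^^ m) x - ((proj \<circ> F) ^^ m) x \<in> K"
proof (induction m)
  case 0
  show ?case using subgrp_K by (simp add: subgrp_def)
next
  case (Suc m)
  define y where "y = ((proj \<circ> F) ^^ m) x"
  have split: "(F ^^ Suc m) x - ((proj \<circ> F) ^^ Suc m) x
      = F ((F ^^ m) x - y) + (F y - proj (F y))"
    by (simp add: y_def additive.diff[OF F])
  have "F ((F ^^ m) x - y) \<in> K"
    using FK Suc.IH unfolding y_def by blast
  then show ?case
    unfolding split by (rule subgrp_add[OF subgrp_K _ minus_proj_mem])
qed

lemma funpow_mem_range_Suc_plus_K:
  assumes F: "additive F" and FK: "F ` K \<subseteq> K"
    and stable: "((proj \<circ> F) ^^ N) ` H = ((proj \<circ> F) ^^ Suc N) ` H"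
  obtains z k where "k \<in> K" and "(F ^^ N) y = (F ^^ Suc N) z + k"
proof -
  let ?\<alpha> = "proj \<circ> F"
  have "(?\<alpha> ^^ N) (proj y) \<in> (?\<alpha> ^^ N) ` H"
    by (rule imageI[OF proj_mem])
  then obtain b where b: "(?\<alpha> ^^ N) (proj y) = (?\<alpha> ^^ Suc N) b"
    unfolding stable by blast
  have FNK: "(F ^^ n) k \<in> K" if "k \<in> K" for n k
    using that FK by (induction n) auto
  have "(F ^^ N) (y - proj y) = (F ^^ N) y - (F ^^ N) (proj y)"
    by (rule additive.diff[OF additive_funpow[OF F]])
  then have "(F ^^ N) y - (F ^^ Suc N) b
      = ((F ^^ N) (proj y) - (?\<alpha> ^^ N) (proj y))
        - ((F ^^ Suc N) b - (?\<alpha> ^^ Suc N) b) + (F ^^ N) (y - proj y)"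
    by (simp only: b) (simp add: algebra_simps)
  also have "\<dots> \<in> K"
    by (intro subgrp_add[OF subgrp_K] subgrp_diff[OF subgrp_K] FNK minus_proj_mem
        funpow_minus_funpow_proj_mem[OF F FK])
  finally show thesis
    by (intro that[of "(F ^^ N) y - (F ^^ Suc N) b" b]) simp_all
qed

lemma range_funpow_double_stable:
  assumes F: "additive F" and FK: "F ` K \<subseteq> K"
    and stable_H: "((proj \<circ> F) ^^ N) ` H = ((proj \<circ> F) ^^ Suc N) ` H"
    and stable_K: "(F ^^ N) ` K \<subseteq> (F ^^ Suc (N + N)) ` K"
  shows "range (F ^^ (N + N)) = range (F ^^ Suc (N + N))"
proof (rule subset_antisym[OF _ range_funpow_Suc_subset], rule image_subsetI)
  fix y
  obtain z k where k: "k \<in> K" "(F ^^ N) y = (F ^^ Suc N) z + k"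
    using funpow_mem_range_Suc_plus_K[OF F FK stable_H] .
  obtain w where w: "(F ^^ N) k = (F ^^ Suc (N + N)) w"
    using stable_K k(1) by blast
  have Suc_N_N: "F ^^ Suc (N + N) = F ^^ N \<circ> F ^^ Suc N"
    by (simp only: add_Suc_right[symmetric] funpow_add)
  have "(F ^^ (N + N)) y = (F ^^ N) ((F ^^ Suc N) z) + (F ^^ N) k"
    using k(2) additive.add[OF additive_funpow[OF F]] by (simp only: funpow_add comp_apply)
  also have "\<dots> = (F ^^ Suc (N + N)) z + (F ^^ Suc (N + N)) w"
    by (simp only: w Suc_N_N comp_apply)
  also have "\<dots> = (F ^^ Suc (N + N)) (z + w)"
    by (rule additive.add[OF additive_funpow[OF F], symmetric])
  finally show "(F ^^ (N + N)) y \<in> range (F ^^ Suc (N + N))"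
    by (rule range_eqI)
qed

lemma co_Hopfian_of_summands:
  assumes FK: "\<And>F. additive F \<Longrightarrow> F ` K \<subseteq> K"
    and co_Hopfian_H: "strongly_co_Hopfian H" and co_Hopfian_K: "strongly_co_Hopfian K"
  shows "strongly_co_Hopfian (UNIV :: 'a set)"
  unfolding strongly_co_Hopfian_def endo_on_UNIV_iff_additive
proof (intro allI impI)
  fix F :: "'a \<Rightarrow> 'a" assume F: "additive F"
  have "endo_on H (proj \<circ> F)"
    using additive_comp[OF additive_proj F] proj_mem by (simp add: endo_on_def additive_def)
  then obtain n1
    where n1: "\<And>m. n1 \<le> m \<Longrightarrow> ((proj \<circ> F) ^^ m) ` H = ((proj \<circ> F) ^^ n1) ` H"
    using co_Hopfian_H strongly_co_Hopfian_imp_stable by blast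
  have "endo_on K F"
    using FK[OF F] F by (auto simp: endo_on_def additive_def)
  then obtain n2 where n2: "\<And>m. n2 \<le> m \<Longrightarrow> (F ^^ m) ` K = (F ^^ n2) ` K"
    using co_Hopfian_K strongly_co_Hopfian_imp_stable by blast
  define N where "N = max n1 n2"
  have "((proj \<circ> F) ^^ N) ` H = ((proj \<circ> F) ^^ Suc N) ` H"
    using n1[of N] n1[of "Suc N"] by (simp add: N_def)
  moreover have "(F ^^ N) ` K \<subseteq> (F ^^ Suc (N + N)) ` K"
    using n2[of N] n2[of "Suc (N + N)"] by (simp add: N_def)
  ultimately have "range (F ^^ (N + N)) = range (F ^^ Suc (N + N))"
    by (rule range_funpow_double_stable[OF F FK[OF F]])
  then show "\<exists>n. range (F ^^ n) = range (F ^^ Suc n)"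
    by blast
qed

end

lemma sum_const_lessThan_mult:
  fixes m n :: nat
  shows "(\<Sum>i<m * n. x) = (\<Sum>j<m. \<Sum>i<n. x::'a::comm_monoid_add)"
proof -
  have "(\<Sum>i\<in>{j * n..<j * n + n}. x) = (\<Sum>i<n. x)" for j
    using sum.shift_bounds_nat_ivl[of "\<lambda>_. x" 0 "j * n" n]
    by (simp add: atLeast0LessThan add.commute)
  then show ?thesis
    by (simp add: sum.nat_group[symmetric])
qed

lemma subgrp_torsion_part: "subgrp (torsion_part :: 'a::ab_group_add set)"
  unfolding subgrp_def
proof (intro conjI ballI)
  show "0 \<in> torsion_part"
    unfolding torsion_part_def by (auto intro: exI[of _ 1])
next
  fix x y :: 'a assume "x \<in> torsion_part" "y \<in> torsion_part"
  then obtain n m :: nat where "n > 0" "(\<Sum>i<n. x) = 0" "m > 0" "(\<Sum>i<m. y) = 0"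
    unfolding torsion_part_def by auto
  then have "n * m > 0" "(\<Sum>i<n * m. x + y) = 0"
    using sum_const_lessThan_mult[where m = m and n = n and x = x]
      sum_const_lessThan_mult[where m = n and n = m and x = y]
    by (simp_all add: sum.distrib mult.commute)
  then show "x + y \<in> torsion_part"
    unfolding torsion_part_def by blast
next
  fix x :: 'a assume "x \<in> torsion_part"
  then show "- x \<in> torsion_part"
    unfolding torsion_part_def by (auto simp: sum_negf)
qed

lemma additive_image_torsion_part:
  assumes "additive F"
  shows "F ` torsion_part \<subseteq> torsion_part"
proof
  fix y assume "y \<in> F ` torsion_part"
  then obtain x where y: "y = F x" and "x \<in> torsion_part"
    by blast
  then obtain n :: nat where n: "n > 0" "(\<Sum>i<n. x) = 0"
    unfolding torsion_part_def by blast
  have "(\<Sum>i<n. y) = F (\<Sum>i<n. x)"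
    unfolding y by (rule additive.sum[OF assms, symmetric])
  then show "y \<in> torsion_part"
    using n additive.zero[OF assms] unfolding torsion_part_def by auto
qed

theorem mainTheorem5:
  fixes A :: "'a::ab_group_add set"
  assumes "subgrp A"
    and "A \<inter> torsion_part = {0}"
    and "{a + t | a t. a \<in> A \<and> t \<in> torsion_part} = UNIV"
  shows "strongly_co_Hopfian (UNIV :: 'a set) \<longleftrightarrow>
           strongly_co_Hopfian (torsion_part :: 'a set) \<and> strongly_co_Hopfian A"
proof -
  interpret direct_sum A torsion_part
    using assms subgrp_torsion_part by unfold_locales
  show ?thesis
    using co_Hopfian_summands co_Hopfian_of_summands additive_image_torsion_part by blast
qed

end
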